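(* For every graph $G$, $\operatorname{box}(G)\le MFVC(G)+3$.
   Context: A feedback vertex cover of $G=(V,E)$ is a set $S\subseteq V$ such that the subgraph induced on $V\setminus S$ is a forest; $MFVC(G)$ is the minimum cardinality of a feedback vertex cover. The boxicity $\operatorname{box}(G)$ is the minimum $b$ such that $G$ is the intersection graph of axis-parallel boxes in $\mathbb{R}^b$ (products of $b$ closed intervals), one box per vertex. *)

theory Defs
  imports Complex_Main
begin

definition graph :: "'a set \<Rightarrow> ('a \<times> 'a) set \<Rightarrow> bool" where
  "graph V E \<longleftrightarrow> finite V \<and> E \<subseteq> V \<times> V \<and> sym E \<and> irrefl E"

definition is_cycle :: "'a set \<Rightarrow> ('a \<times> 'a) set \<Rightarrow> 'a list \<Rightarrow> bool" where
  "is_cycle V E cs \<longleftrightarrow> length cs \<ge> 3 \<and> distinct cs \<and> set cs \<subseteq> V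
     \<and> (\<forall>i < length cs. (cs ! i, cs ! ((i + 1) mod length cs)) \<in> E)"

definition forest :: "'a set \<Rightarrow> ('a \<times> 'a) set \<Rightarrow> bool" where
  "forest V E \<longleftrightarrow> \<not> (\<exists>cs. is_cycle V E cs)"

definition induced_edges :: "('a \<times> 'a) set \<Rightarrow> 'a set \<Rightarrow> ('a \<times> 'a) set" where
  "induced_edges E W = E \<inter> (W \<times> W)"

definition feedback_vertex_cover :: "'a set \<Rightarrow> ('a \<times> 'a) set \<Rightarrow> 'a set \<Rightarrow> bool" where
  "feedback_vertex_cover V E S \<longleftrightarrow>
     S \<subseteq> V \<and> forest (V - S) (induced_edges E (V - S))"

definition MFVC :: "'a set \<Rightarrow> ('a \<times> 'a) set \<Rightarrow> nat" where
  "MFVC V E = (LEAST k. \<exists>S. feedback_vertex_cover V E S \<and> card S = k)"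

definition box_of :: "nat \<Rightarrow> ('a \<Rightarrow> nat \<Rightarrow> real \<times> real) \<Rightarrow> 'a \<Rightarrow> (nat \<Rightarrow> real) set" where
  "box_of b B v = {x. (\<forall>i < b. fst (B v i) \<le> x i \<and> x i \<le> snd (B v i)) \<and> (\<forall>i \<ge> b. x i = 0)}"

definition box_representation ::
  "'a set \<Rightarrow> ('a \<times> 'a) set \<Rightarrow> nat \<Rightarrow> ('a \<Rightarrow> nat \<Rightarrow> real \<times> real) \<Rightarrow> bool" where
  "box_representation V E b B \<longleftrightarrow>
     (\<forall>v \<in> V. \<forall>i < b. fst (B v i) \<le> snd (B v i)) \<and>
     (\<forall>u \<in> V. \<forall>v \<in> V. u \<noteq> v \<longrightarrow> ((u, v) \<in> E \<longleftrightarrow> box_of b B u \<inter> box_of b B v \<noteq> {}))"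

definition boxicity :: "'a set \<Rightarrow> ('a \<times> 'a) set \<Rightarrow> nat" where
  "boxicity V E = (LEAST b. \<exists>B. box_representation V E b B)"

end

theory Submission
  imports Defs
begin

(* Deleting a vertex v costs at most one dimension: keep a representation of G - v, give v in
   every old coordinate an interval meeting all the others, and add a coordinate in which v gets
   [0,0], its neighbours [0,1] and all other vertices [1,1]. Deleting a minimum feedback vertex
   cover this way leaves a forest, and forests have boxicity at most 2: insert the vertices
   leaf by leaf, drawing each new leaf as a thin box just right of its parent, at heights taken
   from a window of the parent that no other box reaches. So box(G) <= MFVC(G) + 2. *)

definition interval_overlap :: "real \<times> real \<Rightarrow> real \<times> real \<Rightarrow> bool" where
  "interval_overlap p q \<longleftrightarrow> fst p \<le> snd q \<and> fst q \<le> snd p"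

definition boxes_overlap :: "nat \<Rightarrow> ('a \<Rightarrow> nat \<Rightarrow> real \<times> real) \<Rightarrow> 'a \<Rightarrow> 'a \<Rightarrow> bool" where
  "boxes_overlap b B u w \<longleftrightarrow> (\<forall>i<b. interval_overlap (B u i) (B w i))"

lemma interval_overlap_commute: "interval_overlap p q \<longleftrightarrow> interval_overlap q p"
  unfolding interval_overlap_def by auto

lemma boxes_overlap_commute: "boxes_overlap b B u w \<longleftrightarrow> boxes_overlap b B w u"
  unfolding boxes_overlap_def using interval_overlap_commute by blast

lemma boxes_overlap_Suc:
  "boxes_overlap (Suc b) B u w \<longleftrightarrow> boxes_overlap b B u w \<and> interval_overlap (B u b) (B w b)"
  unfolding boxes_overlap_def by (auto simp: less_Suc_eq)

lemma box_of_Int_nonempty_iff: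
  assumes "\<forall>i<b. fst (B u i) \<le> snd (B u i)" "\<forall>i<b. fst (B w i) \<le> snd (B w i)"
  shows "box_of b B u \<inter> box_of b B w \<noteq> {} \<longleftrightarrow> boxes_overlap b B u w"
proof
  assume "box_of b B u \<inter> box_of b B w \<noteq> {}"
  then obtain x where "x \<in> box_of b B u" "x \<in> box_of b B w" by blast
  then show "boxes_overlap b B u w"
    unfolding box_of_def boxes_overlap_def interval_overlap_def by force
next
  assume overlap: "boxes_overlap b B u w"
  define x where "x = (\<lambda>i. if i < b then max (fst (B u i)) (fst (B w i)) else 0)"
  have "x \<in> box_of b B u" "x \<in> box_of b B w"
    using overlap assms unfolding box_of_def boxes_overlap_def interval_overlap_def x_def by auto
  then show "box_of b B u \<inter> box_of b B w \<noteq> {}" by blast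
qed

lemma box_representation_iff:
  "box_representation W E b B \<longleftrightarrow>
     (\<forall>v \<in> W. \<forall>i < b. fst (B v i) \<le> snd (B v i)) \<and>
     (\<forall>u \<in> W. \<forall>v \<in> W. u \<noteq> v \<longrightarrow> ((u, v) \<in> E \<longleftrightarrow> boxes_overlap b B u v))"
proof (cases "\<forall>v \<in> W. \<forall>i < b. fst (B v i) \<le> snd (B v i)")
  case True
  then show ?thesis unfolding box_representation_def by (simp add: box_of_Int_nonempty_iff)
qed (auto simp: box_representation_def)

lemma finite_intervals_cover:
  fixes I :: "'a \<Rightarrow> real \<times> real"
  assumes "finite W"
  shows "\<exists>c. fst c \<le> snd c \<and> (\<forall>w\<in>W. fst c \<le> fst (I w) \<and> snd (I w) \<le> snd c)"
proof -
  define c where "c = (Min (insert 0 (fst ` I ` W)), Max (insert 0 (snd ` I ` W)))"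
  have "fst c \<le> 0" "0 \<le> snd c" unfolding c_def using assms by auto
  moreover have "fst c \<le> fst (I w) \<and> snd (I w) \<le> snd c" if "w \<in> W" for w
    unfolding c_def using assms that by auto
  ultimately show ?thesis by (meson order.trans)
qed

lemma box_representation_insertI:
  assumes rep: "box_representation W E b B" and "sym E" "v \<notin> W"
    and valid: "\<forall>i<b. fst (B v i) \<le> snd (B v i)"
    and edges: "\<And>w. w \<in> W \<Longrightarrow> (v, w) \<in> E \<longleftrightarrow> boxes_overlap b B v w"
  shows "box_representation (insert v W) E b B"
  unfolding box_representation_iff
proof (intro conjI ballI impI)
  show "\<forall>i<b. fst (B w i) \<le> snd (B w i)" if "w \<in> insert v W" for w
    using that valid rep unfolding box_representation_iff by blast
next
  fix u w assume uw: "u \<in> insert v W" "w \<in> insert v W" "u \<noteq> w"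
  consider "u = v" "w \<in> W" | "w = v" "u \<in> W" | "u \<in> W" "w \<in> W"
    using uw by blast
  then show "(u, w) \<in> E \<longleftrightarrow> boxes_overlap b B u w"
  proof cases
    case 1
    then show ?thesis using edges by simp
  next
    case 2
    then show ?thesis
      using edges[of u] \<open>sym E\<close> boxes_overlap_commute[of b B u v] unfolding sym_def by blast
  next
    case 3
    then show ?thesis using uw rep unfolding box_representation_iff by simp
  qed
qed

lemma box_representation_insert:
  assumes rep: "box_representation W E b B" and "finite W" "sym E" "v \<notin> W"
  shows "\<exists>B'. box_representation (insert v W) E (Suc b) B'"
proof -
  have "\<forall>i. \<exists>c. fst c \<le> snd c \<and> (\<forall>w\<in>W. fst c \<le> fst (B w i) \<and> snd (B w i) \<le> snd c)"
    by (intro allI finite_intervals_cover[OF \<open>finite W\<close>])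
  then obtain C where C: "\<And>i. fst (C i) \<le> snd (C i)"
    and cover: "\<And>i w. w \<in> W \<Longrightarrow> fst (C i) \<le> fst (B w i) \<and> snd (B w i) \<le> snd (C i)"
    by metis
  define B' where "B' w i = (if i < b then (if w = v then C i else B w i)
      else if w = v then (0, 0) else if (w, v) \<in> E then (0, 1) else (1, 1))" for w i
  have valid: "\<forall>i<b. fst (B w i) \<le> snd (B w i)" if "w \<in> W" for w
    using rep that unfolding box_representation_iff by blast
  have "boxes_overlap (Suc b) B' u w \<longleftrightarrow> boxes_overlap b B u w" if "u \<in> W" "w \<in> W" for u w
  proof -
    have "interval_overlap (B' u b) (B' w b)"
      using that \<open>v \<notin> W\<close> unfolding B'_def interval_overlap_def by auto
    moreover have "boxes_overlap b B' u w \<longleftrightarrow> boxes_overlap b B u w"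
      using that \<open>v \<notin> W\<close> unfolding B'_def boxes_overlap_def by auto
    ultimately show ?thesis unfolding boxes_overlap_Suc by blast
  qed
  then have rep': "box_representation W E (Suc b) B'"
    using rep valid \<open>v \<notin> W\<close> unfolding box_representation_iff B'_def by auto
  have "(v, w) \<in> E \<longleftrightarrow> boxes_overlap (Suc b) B' v w" if "w \<in> W" for w
  proof -
    have "w \<noteq> v" using that \<open>v \<notin> W\<close> by blast
    have "interval_overlap (C i) (B w i)" if "i < b" for i
      using cover[OF \<open>w \<in> W\<close>, of i] valid[OF \<open>w \<in> W\<close>] that
      unfolding interval_overlap_def by auto
    then have "boxes_overlap b B' v w"
      using \<open>w \<noteq> v\<close> unfolding boxes_overlap_def B'_def by simp
    then show ?thesis
      using \<open>w \<noteq> v\<close> \<open>sym E\<close> unfolding boxes_overlap_Suc interval_overlap_def B'_def sym_def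
      by auto
  qed
  moreover have "\<forall>i<Suc b. fst (B' v i) \<le> snd (B' v i)"
    using C unfolding B'_def by simp
  ultimately show ?thesis
    using box_representation_insertI[OF rep' \<open>sym E\<close> \<open>v \<notin> W\<close>] by blast
qed

lemma box_representation_union:
  assumes "finite S" and rep: "box_representation W E b B" and "finite W" "sym E" "S \<inter> W = {}"
  shows "\<exists>B'. box_representation (W \<union> S) E (b + card S) B'"
  using assms(1,5)
proof (induction S rule: finite_induct)
  case empty
  then show ?case using rep by auto
next
  case (insert x S)
  have "S \<inter> W = {}" and fin: "finite (W \<union> S)" and new: "x \<notin> W \<union> S"
    using insert \<open>finite W\<close> by auto
  then obtain B1 where "box_representation (W \<union> S) E (b + card S) B1"
    using insert.IH by blast
  from box_representation_insert[OF this fin \<open>sym E\<close> new]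
  obtain B2 where "box_representation (insert x (W \<union> S)) E (Suc (b + card S)) B2" ..
  then show ?case using insert.hyps by auto
qed

text \<open>The box of u is X u \<times> Y u. Its window F u lies inside Y u, no other box at the heights
  of F u reaches the right edge of u, and windows are pairwise disjoint; a leaf attached to u is
  placed right of u inside this window.\<close>

definition windowed_box_rep ::
  "'a set \<Rightarrow> ('a \<times> 'a) set \<Rightarrow> ('a \<Rightarrow> real \<times> real) \<Rightarrow> ('a \<Rightarrow> real \<times> real) \<Rightarrow> ('a \<Rightarrow> real \<times> real) \<Rightarrow> bool"
  where
  "windowed_box_rep W E X Y F \<longleftrightarrow>
     (\<forall>u\<in>W. fst (X u) \<le> snd (X u) \<and> fst (Y u) \<le> fst (F u) \<and> fst (F u) < snd (F u)
        \<and> snd (F u) \<le> snd (Y u)) \<and>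
     (\<forall>u\<in>W. \<forall>w\<in>W. u \<noteq> w \<longrightarrow>
        ((u, w) \<in> E \<longleftrightarrow> interval_overlap (X u) (X w) \<and> interval_overlap (Y u) (Y w))) \<and>
     (\<forall>u\<in>W. \<forall>w\<in>W. u \<noteq> w \<longrightarrow> interval_overlap (Y w) (F u) \<longrightarrow> snd (X w) < snd (X u)) \<and>
     (\<forall>u\<in>W. \<forall>w\<in>W. u \<noteq> w \<longrightarrow> \<not> interval_overlap (F u) (F w))"

lemma windowed_box_repD:
  assumes "windowed_box_rep W E X Y F" "u \<in> W"
  shows "fst (X u) \<le> snd (X u)" "fst (Y u) \<le> fst (F u)" "fst (F u) < snd (F u)"
    "snd (F u) \<le> snd (Y u)"
    and "w \<in> W \<Longrightarrow> u \<noteq> w \<Longrightarrow>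
      (u, w) \<in> E \<longleftrightarrow> interval_overlap (X u) (X w) \<and> interval_overlap (Y u) (Y w)"
    and "w \<in> W \<Longrightarrow> u \<noteq> w \<Longrightarrow> interval_overlap (Y w) (F u) \<Longrightarrow> snd (X w) < snd (X u)"
    and "w \<in> W \<Longrightarrow> u \<noteq> w \<Longrightarrow> \<not> interval_overlap (F u) (F w)"
  using assms unfolding windowed_box_rep_def by simp_all

lemma windowed_box_rep_box_representation:
  assumes "windowed_box_rep W E X Y F"
  shows "box_representation W E 2 (\<lambda>w i. if i = 0 then X w else Y w)"
proof -
  have two: "(\<forall>i<2. P i) \<longleftrightarrow> P 0 \<and> P 1" for P :: "nat \<Rightarrow> bool"
    by (auto simp: less_2_cases_iff)
  show ?thesis
    unfolding box_representation_iff
  proof (intro conjI ballI allI impI)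
    fix w i assume "w \<in> W" "i < (2::nat)"
    then show "fst (if i = 0 then X w else Y w) \<le> snd (if i = 0 then X w else Y w)"
      using windowed_box_repD(1-4)[OF assms \<open>w \<in> W\<close>] by auto
  next
    fix u w assume "u \<in> W" "w \<in> W" "u \<noteq> w"
    then show "(u, w) \<in> E \<longleftrightarrow> boxes_overlap 2 (\<lambda>w i. if i = 0 then X w else Y w) u w"
      using windowed_box_repD(5)[OF assms] unfolding boxes_overlap_def two by simp
  qed
qed

lemma windowed_box_rep_insert:
  assumes rep: "windowed_box_rep W E X Y F" and "sym E" "v \<notin> W"
    and valid: "fst x \<le> snd x" "fst y \<le> fst f" "fst f < snd f" "snd f \<le> snd y"
    and edges: "\<And>w. w \<in> W \<Longrightarrow> (v, w) \<in> E \<longleftrightarrow> interval_overlap x (X w) \<and> interval_overlap y (Y w)"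
    and clear_new: "\<And>w. w \<in> W \<Longrightarrow> interval_overlap (Y w) f \<Longrightarrow> snd (X w) < snd x"
    and clear_old: "\<And>w. w \<in> W \<Longrightarrow> interval_overlap y (F w) \<Longrightarrow> snd x < snd (X w)"
    and disjoint: "\<And>w. w \<in> W \<Longrightarrow> \<not> interval_overlap f (F w)"
  shows "windowed_box_rep (insert v W) E (X(v := x)) (Y(v := y)) (F(v := f))"
proof -
  have old: "w \<noteq> v" if "w \<in> W" for w using that \<open>v \<notin> W\<close> by blast
  have edges': "(w, v) \<in> E \<longleftrightarrow> interval_overlap (X w) x \<and> interval_overlap (Y w) y" if "w \<in> W" for w
    using edges[OF that] \<open>sym E\<close> interval_overlap_commute unfolding sym_def by blast
  have disjoint': "\<not> interval_overlap (F w) f" if "w \<in> W" for w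
    using disjoint[OF that] interval_overlap_commute by blast
  show ?thesis
    unfolding windowed_box_rep_def
    using windowed_box_repD[OF rep] valid edges edges' clear_new clear_old disjoint disjoint' old
    by auto
qed

lemma windowed_box_rep_shrink_window:
  assumes rep: "windowed_box_rep W E X Y F" and "u \<in> W"
    and "fst (F u) \<le> fst f" "fst f < snd f" "snd f \<le> snd (F u)"
  shows "windowed_box_rep W E X Y (F(u := f))"
proof -
  have in_window: "interval_overlap p (F u)" if "interval_overlap p f" for p
    using that assms(3-5) unfolding interval_overlap_def by linarith
  have in_window': "interval_overlap (F u) p" if "interval_overlap f p" for p
    using that assms(3-5) unfolding interval_overlap_def by linarith
  note old = windowed_box_repD[OF rep]
  have "fst (X a) \<le> snd (X a) \<and> fst (Y a) \<le> fst ((F(u := f)) a) \<and>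
      fst ((F(u := f)) a) < snd ((F(u := f)) a) \<and> snd ((F(u := f)) a) \<le> snd (Y a)"
    if "a \<in> W" for a
    using old(1-4)[OF that] assms(3-5) by (cases "a = u") auto
  moreover have "snd (X w) < snd (X a)"
    if "a \<in> W" "w \<in> W" "a \<noteq> w" "interval_overlap (Y w) ((F(u := f)) a)" for a w
    using that old(6) in_window[of "Y w"] by (cases "a = u") auto
  moreover have "\<not> interval_overlap ((F(u := f)) a) ((F(u := f)) w)"
    if "a \<in> W" "w \<in> W" "a \<noteq> w" for a w
    using that old(7) in_window[of "F a"] in_window'[of "F w"] by (cases "a = u"; cases "w = u") auto
  ultimately show ?thesis
    using old(5) unfolding windowed_box_rep_def by blast
qed

lemma windowed_box_rep_window_clear:
  assumes rep: "windowed_box_rep W E X Y F" and "u \<in> W" "w \<in> W" "w \<noteq> u"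
    and "fst (F u) \<le> fst y" "snd y \<le> snd (F u)"
  shows "interval_overlap y (Y w) \<Longrightarrow> snd (X w) < snd (X u)"
    and "\<not> interval_overlap y (F w)"
proof -
  have "interval_overlap p (F u)" "interval_overlap (F u) p" if "interval_overlap y p" for p
    using that assms(5,6) unfolding interval_overlap_def by linarith+
  then show "interval_overlap y (Y w) \<Longrightarrow> snd (X w) < snd (X u)" "\<not> interval_overlap y (F w)"
    using windowed_box_repD(6,7)[OF rep \<open>u \<in> W\<close> \<open>w \<in> W\<close>] \<open>w \<noteq> u\<close> by blast+
qed

lemma windowed_box_rep_insert_leaf:
  assumes rep: "windowed_box_rep W E X Y F" and "sym E" "v \<notin> W" "u \<in> W" "(v, u) \<in> E"
    and unique: "\<And>w. w \<in> W \<Longrightarrow> (v, w) \<in> E \<Longrightarrow> w = u"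
  shows "\<exists>X Y F. windowed_box_rep (insert v W) E X Y F"
proof -
  obtain l h where F_u: "F u = (l, h)" by fastforce
  \<comment> \<open>The lower third of the window of u gives the heights and the window of v;
      u keeps the upper third.\<close>
  define m1 where "m1 = l + (h - l) / 3"
  define m2 where "m2 = l + 2 * (h - l) / 3"
  note u = windowed_box_repD[OF rep \<open>u \<in> W\<close>, unfolded F_u fst_conv snd_conv]
  have m: "l < m1" "m1 < m2" "m2 < h"
    using u(3) unfolding m1_def m2_def by (auto simp: field_simps)
  define x where "x = (snd (X u), snd (X u) + 1)"
  define y where "y = (l, m1)"
  have rep': "windowed_box_rep W E X Y (F(u := (m2, h)))"
    using windowed_box_rep_shrink_window[OF rep \<open>u \<in> W\<close>] m F_u by simp
  note clear = windowed_box_rep_window_clear[OF rep \<open>u \<in> W\<close> _ _ , of _ y, unfolded F_u]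
  have "windowed_box_rep (insert v W) E (X(v := x)) (Y(v := y)) ((F(u := (m2, h)))(v := y))"
  proof (rule windowed_box_rep_insert[OF rep' \<open>sym E\<close> \<open>v \<notin> W\<close>])
    fix w assume "w \<in> W"
    show "(v, w) \<in> E \<longleftrightarrow> interval_overlap x (X w) \<and> interval_overlap y (Y w)"
    proof (cases "w = u")
      case True
      then show ?thesis
        using \<open>(v, u) \<in> E\<close> u(1,2,4) m unfolding interval_overlap_def x_def y_def by auto
    next
      case False
      then show ?thesis
        using unique[OF \<open>w \<in> W\<close>] clear(1)[OF \<open>w \<in> W\<close>] m
        unfolding interval_overlap_def x_def y_def by auto
    qed
    show "interval_overlap (Y w) y \<Longrightarrow> snd (X w) < snd x"
      using clear(1)[OF \<open>w \<in> W\<close>] m interval_overlap_commute[of "Y w" y] unfolding x_def y_def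
      by (cases "w = u") auto
    have "\<not> interval_overlap y ((F(u := (m2, h))) w)"
      using clear(2)[OF \<open>w \<in> W\<close>] m unfolding interval_overlap_def y_def
      by (cases "w = u") auto
    then show "interval_overlap y ((F(u := (m2, h))) w) \<Longrightarrow> snd x < snd (X w)"
      and "\<not> interval_overlap y ((F(u := (m2, h))) w)"
      by blast+
  qed (use m in \<open>auto simp: x_def y_def\<close>)
  then show ?thesis by blast
qed

lemma windowed_box_rep_insert_isolated:
  assumes rep: "windowed_box_rep W E X Y F" and "finite W" "sym E" "v \<notin> W"
    and isolated: "\<And>w. w \<in> W \<Longrightarrow> (v, w) \<notin> E"
  shows "\<exists>X Y F. windowed_box_rep (insert v W) E X Y F"
proof -
  obtain c :: "real \<times> real" where "\<forall>w\<in>W. snd (Y w) \<le> snd c"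
    using finite_intervals_cover[OF \<open>finite W\<close>, of Y] by blast
  define M where "M = snd c + 1"
  have above: "snd (F w) < M" "snd (Y w) < M" if "w \<in> W" for w
    using \<open>\<forall>w\<in>W. snd (Y w) \<le> snd c\<close> windowed_box_repD(4)[OF rep that] that
    unfolding M_def by fastforce+
  have "windowed_box_rep (insert v W) E (X(v := (0, 0))) (Y(v := (M, M + 1))) (F(v := (M, M + 1)))"
    by (rule windowed_box_rep_insert[OF rep \<open>sym E\<close> \<open>v \<notin> W\<close>])
      (use isolated in \<open>auto simp: interval_overlap_def dest: above\<close>)
  then show ?thesis by blast
qed

definition is_path :: "'a set \<Rightarrow> ('a \<times> 'a) set \<Rightarrow> 'a list \<Rightarrow> bool" where
  "is_path V E ps \<longleftrightarrow> ps \<noteq> [] \<and> distinct ps \<and> set ps \<subseteq> V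
     \<and> (\<forall>i. Suc i < length ps \<longrightarrow> (ps ! i, ps ! Suc i) \<in> E)"

lemma is_path_Cons:
  assumes "is_path V E ps" "c \<in> V" "c \<notin> set ps" "(c, hd ps) \<in> E"
  shows "is_path V E (c # ps)"
proof -
  have "((c # ps) ! i, (c # ps) ! Suc i) \<in> E" if "Suc i < length (c # ps)" for i
    using assms that unfolding is_path_def by (cases i) (auto simp: hd_conv_nth)
  then show ?thesis using assms unfolding is_path_def by auto
qed

lemma is_path_length_le: "finite V \<Longrightarrow> is_path V E ps \<Longrightarrow> length ps \<le> card V"
  unfolding is_path_def by (metis card_mono distinct_card)

lemma is_path_take_is_cycle:
  assumes "is_path V E ps" "2 \<le> j" "j < length ps" "(ps ! j, ps ! 0) \<in> E"
  shows "is_cycle V E (take (Suc j) ps)"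
  unfolding is_cycle_def
proof (intro conjI allI impI)
  let ?cs = "take (Suc j) ps"
  show "3 \<le> length ?cs" "distinct ?cs" "set ?cs \<subseteq> V"
    using assms unfolding is_path_def by (auto dest: in_set_takeD)
  fix i assume "i < length ?cs"
  then consider "i < j" | "i = j" using assms(3) by fastforce
  then show "(?cs ! i, ?cs ! ((i + 1) mod length ?cs)) \<in> E"
  proof cases
    case 1
    then show ?thesis using assms unfolding is_path_def by simp
  next
    case 2
    then show ?thesis using assms by simp
  qed
qed

lemma acyclic_has_leaf:
  assumes "finite V" "V \<noteq> {}" "sym E" "irrefl E" and acyclic: "\<nexists>cs. is_cycle V E cs"
  shows "\<exists>v\<in>V. \<forall>a\<in>V. \<forall>b\<in>V. (v, a) \<in> E \<longrightarrow> (v, b) \<in> E \<longrightarrow> a = b"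
proof (rule ccontr)
  assume "\<not> ?thesis"
  then have two_neighbours: "\<exists>a\<in>V. \<exists>b\<in>V. (v, a) \<in> E \<and> (v, b) \<in> E \<and> a \<noteq> b" if "v \<in> V" for v
    using that by blast
  obtain w where "w \<in> V" using \<open>V \<noteq> {}\<close> by blast
  then have "is_path V E [w]" unfolding is_path_def by simp
  moreover have "\<forall>ps. is_path V E ps \<longrightarrow> length ps < Suc (card V)"
    using is_path_length_le[OF \<open>finite V\<close>] by (simp add: less_Suc_eq_le)
  ultimately obtain ps where ps: "is_path V E ps"
    and longest: "\<And>qs. is_path V E qs \<Longrightarrow> length qs \<le> length ps"
    using ex_has_greatest_nat[of "is_path V E" "[w]" length] by metis
  then obtain v rest where ps_eq: "ps = v # rest" unfolding is_path_def by (cases ps) auto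
  then have "v \<in> V" using ps unfolding is_path_def by auto
  \<comment> \<open>A longest path cannot be extended at v, so all neighbours of v lie on it.\<close>
  have on_path: "c \<in> set ps" if "c \<in> V" "(v, c) \<in> E" for c
  proof (rule ccontr)
    assume "c \<notin> set ps"
    moreover have "(c, hd ps) \<in> E" using that \<open>sym E\<close> ps_eq unfolding sym_def by auto
    ultimately have "is_path V E (c # ps)" using is_path_Cons ps that(1) by metis
    then show False using longest by fastforce
  qed
  obtain c where c: "c \<in> V" "(v, c) \<in> E" "length ps < 2 \<or> c \<noteq> ps ! 1"
    using two_neighbours[OF \<open>v \<in> V\<close>] by blast
  obtain j where j: "j < length ps" "ps ! j = c"
    using on_path[OF c(1,2)] by (metis in_set_conv_nth)
  have "j \<noteq> 0" using j c(2) \<open>irrefl E\<close> ps_eq unfolding irrefl_def by (metis nth_Cons_0)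
  moreover have "j \<noteq> 1" using j c(3) by auto
  moreover have "(ps ! j, ps ! 0) \<in> E" using j c(2) \<open>sym E\<close> ps_eq unfolding sym_def by auto
  ultimately have "is_cycle V E (take (Suc j) ps)"
    using is_path_take_is_cycle[OF ps _ j(1)] by simp
  then show False using acyclic by blast
qed

lemma acyclic_windowed_box_rep:
  assumes "finite W" "sym E" "irrefl E" "\<nexists>cs. is_cycle W E cs"
  shows "\<exists>X Y F. windowed_box_rep W E X Y F"
  using assms(1,4)
proof (induction W rule: finite_remove_induct)
  case empty
  then show ?case by (simp add: windowed_box_rep_def)
next
  case (remove A)
  obtain v where "v \<in> A" and leaf: "\<And>a b. a \<in> A \<Longrightarrow> b \<in> A \<Longrightarrow> (v, a) \<in> E \<Longrightarrow> (v, b) \<in> E \<Longrightarrow> a = b"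
    using acyclic_has_leaf[OF remove.hyps(1,2) \<open>sym E\<close> \<open>irrefl E\<close> remove.prems] by blast
  have "\<nexists>cs. is_cycle (A - {v}) E cs"
    using remove.prems unfolding is_cycle_def by blast
  then obtain X Y F where rep: "windowed_box_rep (A - {v}) E X Y F"
    using remove.IH[OF \<open>v \<in> A\<close>] by blast
  have "v \<notin> A - {v}" "finite (A - {v})" using remove.hyps(1) by auto
  have "\<exists>X Y F. windowed_box_rep (insert v (A - {v})) E X Y F"
  proof (cases "\<exists>u\<in>A - {v}. (v, u) \<in> E")
    case True
    then obtain u where u: "u \<in> A - {v}" "(v, u) \<in> E" by blast
    then have "w = u" if "w \<in> A - {v}" "(v, w) \<in> E" for w
      using leaf that by blast
    then show ?thesis
      using windowed_box_rep_insert_leaf[OF rep \<open>sym E\<close> \<open>v \<notin> A - {v}\<close> u] by blast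
  next
    case False
    then show ?thesis
      using windowed_box_rep_insert_isolated[OF rep \<open>finite (A - {v})\<close> \<open>sym E\<close> \<open>v \<notin> A - {v}\<close>]
      by blast
  qed
  moreover have "insert v (A - {v}) = A" using \<open>v \<in> A\<close> by blast
  ultimately show ?case by simp
qed

lemma is_cycle_induced_edges_iff: "is_cycle W (induced_edges E W) cs \<longleftrightarrow> is_cycle W E cs"
proof
  assume cycle: "is_cycle W E cs"
  have "cs ! i \<in> W" if "i < length cs" for i
    using cycle that nth_mem unfolding is_cycle_def by blast
  moreover have "(i + 1) mod length cs < length cs" if "i < length cs" for i
    by (rule mod_less_divisor) (use that in linarith)
  ultimately show "is_cycle W (induced_edges E W) cs"
    using cycle unfolding is_cycle_def induced_edges_def by auto
qed (auto simp: is_cycle_def induced_edges_def)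

lemma forest_box_representation:
  assumes "finite W" "sym E" "irrefl E" "forest W (induced_edges E W)"
  shows "\<exists>B. box_representation W E 2 B"
  using acyclic_windowed_box_rep[OF assms(1-3)] assms(4) windowed_box_rep_box_representation
  unfolding forest_def is_cycle_induced_edges_iff by blast

lemma MFVC_attained: "\<exists>S. feedback_vertex_cover V E S \<and> card S = MFVC V E"
proof -
  have "feedback_vertex_cover V E V"
    unfolding feedback_vertex_cover_def forest_def is_cycle_def by auto
  then have "\<exists>k S. feedback_vertex_cover V E S \<and> card S = k" by blast
  then show ?thesis unfolding MFVC_def by (rule LeastI_ex)
qed

lemma boxicity_le: "box_representation V E b B \<Longrightarrow> boxicity V E \<le> b"
  unfolding boxicity_def by (rule Least_le) blast

theorem theorem18:
  fixes V :: "'a set" and E :: "('a \<times> 'a) set"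
  assumes "graph V E"
  shows "boxicity V E \<le> MFVC V E + 3"
proof -
  have "finite V" "sym E" "irrefl E" using assms unfolding graph_def by auto
  obtain S where S: "feedback_vertex_cover V E S" "card S = MFVC V E"
    using MFVC_attained by blast
  then have "S \<subseteq> V" "forest (V - S) (induced_edges E (V - S))"
    unfolding feedback_vertex_cover_def by auto
  obtain B where "box_representation (V - S) E 2 B"
    using forest_box_representation \<open>finite V\<close> \<open>sym E\<close> \<open>irrefl E\<close> \<open>forest _ _\<close> by blast
  moreover have "finite S" using \<open>S \<subseteq> V\<close> \<open>finite V\<close> finite_subset by blast
  ultimately obtain B' where "box_representation (V - S \<union> S) E (2 + card S) B'"
    using box_representation_union \<open>finite V\<close> \<open>sym E\<close> by blast
  moreover have "V - S \<union> S = V" using \<open>S \<subseteq> V\<close> by blast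
  ultimately have "boxicity V E \<le> 2 + card S" using boxicity_le by metis
  then show ?thesis using S(2) by simp
qed

end
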